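(* Let $L\subseteq Q$ be a dense extension of symmetric Leibniz algebras with $\mathrm{ran}(Q)=\mathrm{lan}(Q)=\{0\}$. Suppose that $\mathscr{A}(Q)$ is strong right ideally absorbed into $\mathscr{A}_0$. Then $Q$ is an algebra of quotients of $L$.
   Context: A symmetric Leibniz algebra satisfies both $[x,[y,z]]=[[x,y],z]-[[x,z],y]$ and $[x,[y,z]]=[[x,y],z]+[y,[x,z]]$. $\mathrm{lan}(Q)=\{x\in Q:[x,Q]=0\}$, $\mathrm{ran}(Q)=\{x\in Q:[Q,x]=0\}$. For $x\in Q$, $R_x(u)=[u,x]$, $L_x(u)=[x,u]$. $M(Q)$ is the associative subalgebra of $\mathrm{End}(Q)$ generated by the identity and all $R_x,L_x$; $L$ is dense in $Q$ if the only $\mu\in M(Q)$ with $\mu(L)=\{0\}$ is $\mu=0$. $\mathscr{A}(Q)$ is the associative subalgebra of $\mathrm{End}(Q)$ generated by all $R_x,L_x$ ($x\in Q$), and $\mathscr{A}_0=\{\mu\in\mathscr{A}(Q):\mu(L)\subseteq L\}$. For an associative algebra $S$ with subalgebra $A$, $S$ is strong right ideally absorbed into $A$ if for any $p,q\in S\setminus\{0\}$ there is a two-sided ideal $I$ of $A$ with $\mathrm{lan}_A(I)=\{a\in A: aI=0\}=\{0\}$ such that $pI\ne\{0\}$ or $qI\ne\{0\}$, and both $pI\subseteq A$, $qI\subseteq A$. With $\mathscr{A}_Q(L)$ the associative algebra generated by $R_x,L_y$ ($x,y\in L$), ${}_L(q)=\mathbb{F}q+\{\sum\xi_i(q):\xi_i\in\mathscr{A}_Q(L)\}$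 and $(L:q)=\{x\in L:[x,{}_L(q)]\subseteq L,[{}_L(q),x]\subseteq L\}$; $Q$ is an algebra of quotients of $L$ if for all $p,q\in Q$, $p\ne0$, there is $x\in(L:q)$ with $[x,p]\ne0$ or $y\in(L:q)$ with $[p,y]\ne0$. *)

theory Defs
  imports Complex_Main
begin

definition bilinear_bracket :: "('f::field \<Rightarrow> 'q::ab_group_add \<Rightarrow> 'q) \<Rightarrow> ('q \<Rightarrow> 'q \<Rightarrow> 'q) \<Rightarrow> bool" where
  "bilinear_bracket scale br \<longleftrightarrow>
     (\<forall>x y z. br (x + y) z = br x z + br y z) \<and>
     (\<forall>x y z. br x (y + z) = br x y + br x z) \<and>
     (\<forall>c x y. br (scale c x) y = scale c (br x y)) \<and>
     (\<forall>c x y. br x (scale c y) = scale c (br x y))"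

definition symmetric_leibniz_algebra ::
  "('f::field \<Rightarrow> 'q::ab_group_add \<Rightarrow> 'q) \<Rightarrow> ('q \<Rightarrow> 'q \<Rightarrow> 'q) \<Rightarrow> bool" where
  "symmetric_leibniz_algebra scale br \<longleftrightarrow>
     vector_space scale \<and> bilinear_bracket scale br \<and>
     (\<forall>x y z. br x (br y z) = br (br x y) z - br (br x z) y) \<and>
     (\<forall>x y z. br x (br y z) = br (br x y) z + br y (br x z))"

definition lan_alg :: "('q::zero \<Rightarrow> 'q \<Rightarrow> 'q) \<Rightarrow> 'q set" where
  "lan_alg br = {x. \<forall>y. br x y = 0}"

definition ran_alg :: "('q::zero \<Rightarrow> 'q \<Rightarrow> 'q) \<Rightarrow> 'q set" where
  "ran_alg br = {x. \<forall>y. br y x = 0}"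

definition subalgebra ::
  "('f::field \<Rightarrow> 'q::ab_group_add \<Rightarrow> 'q) \<Rightarrow> ('q \<Rightarrow> 'q \<Rightarrow> 'q) \<Rightarrow> 'q set \<Rightarrow> bool" where
  "subalgebra scale br L \<longleftrightarrow>
     0 \<in> L \<and> (\<forall>x\<in>L. \<forall>y\<in>L. x + y \<in> L) \<and> (\<forall>c. \<forall>x\<in>L. scale c x \<in> L) \<and>
     (\<forall>x\<in>L. \<forall>y\<in>L. br x y \<in> L)"

definition Rmult :: "('q \<Rightarrow> 'q \<Rightarrow> 'q) \<Rightarrow> 'q \<Rightarrow> 'q \<Rightarrow> 'q" where
  "Rmult br x = (\<lambda>u. br u x)"

definition Lmult :: "('q \<Rightarrow> 'q \<Rightarrow> 'q) \<Rightarrow> 'q \<Rightarrow> 'q \<Rightarrow> 'q" where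
  "Lmult br x = (\<lambda>u. br x u)"

text \<open>Associative subalgebra of End(Q) (product = composition) generated by the
  operators R_x, L_y with x in X, y in Y, optionally together with the identity.\<close>
inductive_set gen_alg ::
  "('f::field \<Rightarrow> 'q::ab_group_add \<Rightarrow> 'q) \<Rightarrow> ('q \<Rightarrow> 'q \<Rightarrow> 'q) \<Rightarrow> bool \<Rightarrow> 'q set \<Rightarrow> 'q set
     \<Rightarrow> ('q \<Rightarrow> 'q) set"
  for scale br withid X Y where
  gen_id: "withid \<Longrightarrow> id \<in> gen_alg scale br withid X Y"
| gen_R: "x \<in> X \<Longrightarrow> Rmult br x \<in> gen_alg scale br withid X Y"
| gen_L: "y \<in> Y \<Longrightarrow> Lmult br y \<in> gen_alg scale br withid X Y"
| gen_zero: "(\<lambda>u. 0) \<in> gen_alg scale br withid X Y"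
| gen_add: "\<mu> \<in> gen_alg scale br withid X Y \<Longrightarrow> \<nu> \<in> gen_alg scale br withid X Y
     \<Longrightarrow> (\<lambda>u. \<mu> u + \<nu> u) \<in> gen_alg scale br withid X Y"
| gen_scale: "\<mu> \<in> gen_alg scale br withid X Y
     \<Longrightarrow> (\<lambda>u. scale c (\<mu> u)) \<in> gen_alg scale br withid X Y"
| gen_comp: "\<mu> \<in> gen_alg scale br withid X Y \<Longrightarrow> \<nu> \<in> gen_alg scale br withid X Y
     \<Longrightarrow> \<mu> \<circ> \<nu> \<in> gen_alg scale br withid X Y"

definition multM where "multM scale br = gen_alg scale br True UNIV UNIV"

definition multA where "multA scale br = gen_alg scale br False UNIV UNIV"

definition multA0 where "multA0 scale br L = {\<mu> \<in> multA scale br. \<mu> ` L \<subseteq> L}"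

definition multAL where "multAL scale br L = gen_alg scale br False L L"

definition dense_in :: "('f::field \<Rightarrow> 'q::ab_group_add \<Rightarrow> 'q) \<Rightarrow> ('q \<Rightarrow> 'q \<Rightarrow> 'q) \<Rightarrow> 'q set \<Rightarrow> bool" where
  "dense_in scale br L \<longleftrightarrow>
     (\<forall>\<mu>\<in>multM scale br. (\<forall>x\<in>L. \<mu> x = 0) \<longrightarrow> \<mu> = (\<lambda>u. 0))"

definition two_sided_ideal ::
  "('f::field \<Rightarrow> 'q::ab_group_add \<Rightarrow> 'q) \<Rightarrow> ('q \<Rightarrow> 'q) set \<Rightarrow> ('q \<Rightarrow> 'q) set \<Rightarrow> bool" where
  "two_sided_ideal scale A I \<longleftrightarrow>
     I \<subseteq> A \<and> (\<lambda>u. 0) \<in> I \<and>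
     (\<forall>\<mu>\<in>I. \<forall>\<nu>\<in>I. (\<lambda>u. \<mu> u + \<nu> u) \<in> I) \<and>
     (\<forall>c. \<forall>\<mu>\<in>I. (\<lambda>u. scale c (\<mu> u)) \<in> I) \<and>
     (\<forall>a\<in>A. \<forall>\<mu>\<in>I. a \<circ> \<mu> \<in> I \<and> \<mu> \<circ> a \<in> I)"

definition lan_in :: "('q \<Rightarrow> 'q::zero) set \<Rightarrow> ('q \<Rightarrow> 'q) set \<Rightarrow> ('q \<Rightarrow> 'q) set" where
  "lan_in A I = {a \<in> A. \<forall>i\<in>I. a \<circ> i = (\<lambda>u. 0)}"

definition strong_right_ideally_absorbed ::
  "('f::field \<Rightarrow> 'q::ab_group_add \<Rightarrow> 'q) \<Rightarrow> ('q \<Rightarrow> 'q) set \<Rightarrow> ('q \<Rightarrow> 'q) set \<Rightarrow> bool" where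
  "strong_right_ideally_absorbed scale S A \<longleftrightarrow>
     (\<forall>p\<in>S. \<forall>q\<in>S. p \<noteq> (\<lambda>u. 0) \<longrightarrow> q \<noteq> (\<lambda>u. 0) \<longrightarrow>
        (\<exists>I. two_sided_ideal scale A I \<and> lan_in A I = {\<lambda>u. 0} \<and>
             ((\<exists>i\<in>I. p \<circ> i \<noteq> (\<lambda>u. 0)) \<or> (\<exists>i\<in>I. q \<circ> i \<noteq> (\<lambda>u. 0))) \<and>
             (\<forall>i\<in>I. p \<circ> i \<in> A) \<and> (\<forall>i\<in>I. q \<circ> i \<in> A)))"

definition idealL :: "('f::field \<Rightarrow> 'q::ab_group_add \<Rightarrow> 'q) \<Rightarrow> ('q \<Rightarrow> 'q \<Rightarrow> 'q) \<Rightarrow> 'q set \<Rightarrow> 'q \<Rightarrow> 'q set" where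
  "idealL scale br L q =
     {scale c q + sum_list (map (\<lambda>\<xi>. \<xi> q) xs) | c xs. set xs \<subseteq> multAL scale br L}"

definition colon :: "('f::field \<Rightarrow> 'q::ab_group_add \<Rightarrow> 'q) \<Rightarrow> ('q \<Rightarrow> 'q \<Rightarrow> 'q) \<Rightarrow> 'q set \<Rightarrow> 'q \<Rightarrow> 'q set" where
  "colon scale br L q =
     {x \<in> L. (\<forall>u\<in>idealL scale br L q. br x u \<in> L) \<and> (\<forall>u\<in>idealL scale br L q. br u x \<in> L)}"

definition algebra_of_quotients ::
  "('f::field \<Rightarrow> 'q::ab_group_add \<Rightarrow> 'q) \<Rightarrow> ('q \<Rightarrow> 'q \<Rightarrow> 'q) \<Rightarrow> 'q set \<Rightarrow> bool" where
  "algebra_of_quotients scale br L \<longleftrightarrow>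
     (\<forall>p q. p \<noteq> 0 \<longrightarrow>
        (\<exists>x\<in>colon scale br L q. br x p \<noteq> 0) \<or> (\<exists>y\<in>colon scale br L q. br p y \<noteq> 0))"

end

theory Submission
  imports Defs
begin

text \<open>Given p \<noteq> 0 and q, absorption applied to R_p and R_q yields an ideal I of \<A>_0 with
  R_q I \<subseteq> \<A>_0 and some j \<in> I with R_p j \<noteq> 0; density then gives y \<in> L with [j y, p] \<noteq> 0.
  The witness x = j y lies in (L:q). Indeed X = I(L) is a subset of L stable under brackets with
  L; q brackets X into L from the right because R_q I \<subseteq> \<A>_0, and from the left because every
  value of an operator in \<A>(Q) is a sum of brackets and thus anticommutes with everything. By the
  two Leibniz identities, the elements bracketing X into L on both sides form a subspace stable
  under \<A>_Q(L), so this subspace contains {}_L(q).\<close>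

lemma gen_alg_without_id_subset:
  "\<mu> \<in> gen_alg scale br False X Y \<Longrightarrow> \<mu> \<in> gen_alg scale br True X Y"
  by (induction rule: gen_alg.induct) (blast intro: gen_alg.intros)+

lemma gen_alg_maps_closed_set:
  assumes "\<mu> \<in> gen_alg scale br withid X Y" and "w \<in> W"
    and "0 \<in> W"
    and "\<And>v w. v \<in> W \<Longrightarrow> w \<in> W \<Longrightarrow> v + w \<in> W"
    and "\<And>c w. w \<in> W \<Longrightarrow> scale c w \<in> W"
    and "\<And>x w. x \<in> X \<Longrightarrow> w \<in> W \<Longrightarrow> br w x \<in> W"
    and "\<And>y w. y \<in> Y \<Longrightarrow> w \<in> W \<Longrightarrow> br y w \<in> W"
  shows "\<mu> w \<in> W"
  using assms(1,2)
  by (induction arbitrary: w rule: gen_alg.induct)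
    (auto simp: Rmult_def Lmult_def intro: assms(3-7))

lemma idealL_subset:
  assumes "q \<in> W"
    and W_zero: "0 \<in> W"
    and W_add: "\<And>v w. v \<in> W \<Longrightarrow> w \<in> W \<Longrightarrow> v + w \<in> W"
    and W_scale: "\<And>c w. w \<in> W \<Longrightarrow> scale c w \<in> W"
    and W_br: "\<And>a w. a \<in> L \<Longrightarrow> w \<in> W \<Longrightarrow> br w a \<in> W \<and> br a w \<in> W"
  shows "idealL scale br L q \<subseteq> W"
proof -
  have "\<xi> q \<in> W" if "\<xi> \<in> multAL scale br L" for \<xi>
    using that unfolding multAL_def
    by (rule gen_alg_maps_closed_set[OF _ \<open>q \<in> W\<close> W_zero W_add W_scale]) (simp_all add: W_br)
  then have "sum_list (map (\<lambda>\<xi>. \<xi> q) \<xi>s) \<in> W" if "set \<xi>s \<subseteq> multAL scale br L" for \<xi>s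
    using that by (induction \<xi>s) (simp_all add: W_zero W_add)
  then show ?thesis
    unfolding idealL_def using \<open>q \<in> W\<close> W_add W_scale by blast
qed

lemma Rmult_nonzero:
  assumes "ran_alg br = {0}" and "p \<noteq> 0"
  shows "Rmult br p \<noteq> (\<lambda>u. 0)"
proof
  assume "Rmult br p = (\<lambda>u. 0)"
  then have "br y p = 0" for y
    unfolding Rmult_def by (rule fun_cong)
  then have "p \<in> ran_alg br" unfolding ran_alg_def by blast
  with assms show False by simp
qed

lemma Rmult_in_multA: "Rmult br p \<in> multA scale br"
  unfolding multA_def by (rule gen_R) simp

lemma multA_subset_multM: "multA scale br \<subseteq> multM scale br"
  unfolding multA_def multM_def using gen_alg_without_id_subset by blast

lemma dense_in_nonzero_at:
  assumes "dense_in scale br L" "\<mu> \<in> multM scale br" "\<mu> \<noteq> (\<lambda>u. 0)"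
  obtains y where "y \<in> L" "\<mu> y \<noteq> 0"
  using assms unfolding dense_in_def by blast

text \<open>The ideal I obtained for the pair (p, q) may witness only q. A second application, to
  (p, p), supplies a nonzero element p \<circ> i1 of A, which does not annihilate I since
  lan_A(I) = 0.\<close>

lemma strong_right_ideally_absorbed_nonzero_product:
  assumes absorbed: "strong_right_ideally_absorbed scale S A"
    and "p \<in> S" "q \<in> S" "p \<noteq> (\<lambda>u. 0)"
  obtains I j where "two_sided_ideal scale A I" "\<forall>i\<in>I. q \<circ> i \<in> A" "j \<in> I" "p \<circ> j \<noteq> (\<lambda>u. 0)"
proof -
  note absorb = absorbed[unfolded strong_right_ideally_absorbed_def, rule_format]
  obtain I1 where I1: "two_sided_ideal scale A I1" "\<forall>i\<in>I1. p \<circ> i \<in> A"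
    and "\<exists>i\<in>I1. p \<circ> i \<noteq> (\<lambda>u. 0)"
    using absorb[OF \<open>p \<in> S\<close> \<open>p \<in> S\<close> \<open>p \<noteq> _\<close> \<open>p \<noteq> _\<close>] by (elim exE conjE) auto
  then obtain i1 where i1: "i1 \<in> I1" "p \<circ> i1 \<noteq> (\<lambda>u. 0)" by blast
  define q' where "q' = (if q = (\<lambda>u. 0) then p else q)"
  have "q' \<in> S" "q' \<noteq> (\<lambda>u. 0)"
    using assms(2-4) by (auto simp: q'_def)
  then obtain I where I: "two_sided_ideal scale A I" "lan_in A I = {\<lambda>u. 0}"
    "\<forall>i\<in>I. q' \<circ> i \<in> A"
    using absorb[OF \<open>p \<in> S\<close> \<open>q' \<in> S\<close> \<open>p \<noteq> _\<close> \<open>q' \<noteq> _\<close>] by (elim exE conjE) auto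
  have "\<forall>i\<in>I. q \<circ> i \<in> A"
  proof (cases "q = (\<lambda>u. 0)")
    case True
    then show ?thesis using I(1) unfolding two_sided_ideal_def by (auto simp: comp_def)
  next
    case False
    then show ?thesis using I(3) by (simp add: q'_def)
  qed
  moreover have "p \<circ> i1 \<notin> lan_in A I" using I(2) i1(2) by blast
  then obtain i where i: "i \<in> I" "p \<circ> i1 \<circ> i \<noteq> (\<lambda>u. 0)"
    using I1(2) i1(1) unfolding lan_in_def by blast
  moreover have "i1 \<circ> i \<in> I"
    using I(1) I1(1) i1(1) i(1) unfolding two_sided_ideal_def by blast
  ultimately show thesis
    using that[OF I(1)] by (simp add: comp_assoc)
qed

locale symmetric_leibniz =
  fixes scale :: "'f::field \<Rightarrow> 'q::ab_group_add \<Rightarrow> 'q"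
    and br :: "'q \<Rightarrow> 'q \<Rightarrow> 'q"
  assumes symmetric_leibniz: "symmetric_leibniz_algebra scale br"
begin

lemma vector_space_scale: "vector_space scale"
  using symmetric_leibniz unfolding symmetric_leibniz_algebra_def by blast

sublocale vector_space scale
  by (rule vector_space_scale)

lemma br_add_left: "br (x + y) z = br x z + br y z"
  and br_add_right: "br x (y + z) = br x y + br x z"
  and br_scale_left: "br (scale c x) y = scale c (br x y)"
  and br_scale_right: "br x (scale c y) = scale c (br x y)"
  using symmetric_leibniz unfolding symmetric_leibniz_algebra_def bilinear_bracket_def by blast+

lemma leibniz_right: "br x (br y z) = br (br x y) z - br (br x z) y"
  and leibniz_left: "br x (br y z) = br (br x y) z + br y (br x z)"
  using symmetric_leibniz unfolding symmetric_leibniz_algebra_def by blast+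

lemma br_zero_left [simp]: "br 0 x = 0"
  using br_add_left[of 0 0 x] by simp

lemma br_zero_right [simp]: "br x 0 = 0"
  using br_add_right[of x 0 0] by simp

lemma br_anticomm_br: "br y (br x z) = - br (br x z) y"
proof -
  have "br (br x y) z - br (br x z) y = br (br x y) z + br y (br x z)"
    using leibniz_right[of x y z] leibniz_left[of x y z] by simp
  then have "br y (br x z) + br (br x z) y = 0"
    by (simp add: algebra_simps)
  then show ?thesis
    by (simp add: eq_neg_iff_add_eq_0)
qed

lemma gen_alg_anticomm:
  assumes "\<mu> \<in> gen_alg scale br False X Y"
  shows "br v (\<mu> u) = - br (\<mu> u) v"
  using assms
proof (induction arbitrary: u v rule: gen_alg.induct)
  case (gen_R x)
  show ?case unfolding Rmult_def by (rule br_anticomm_br)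
next
  case (gen_L y)
  show ?case unfolding Lmult_def by (rule br_anticomm_br)
next
  case (gen_add \<mu> \<nu>)
  then show ?case by (simp add: br_add_left br_add_right)
next
  case (gen_scale \<mu> c)
  then show ?case by (simp add: br_scale_left br_scale_right)
qed simp_all

end

definition bracket_conductor :: "('q \<Rightarrow> 'q \<Rightarrow> 'q) \<Rightarrow> 'q set \<Rightarrow> 'q set \<Rightarrow> 'q set" where
  "bracket_conductor br L X = {w. \<forall>x\<in>X. br x w \<in> L \<and> br w x \<in> L}"

locale leibniz_subalgebra = symmetric_leibniz scale br
  for scale :: "'f::field \<Rightarrow> 'q::ab_group_add \<Rightarrow> 'q" and br +
  fixes L :: "'q set"
  assumes subalgebra: "subalgebra scale br L"
begin

lemma zero_mem: "0 \<in> L"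
  and add_mem: "x \<in> L \<Longrightarrow> y \<in> L \<Longrightarrow> x + y \<in> L"
  and scale_mem: "x \<in> L \<Longrightarrow> scale c x \<in> L"
  and br_mem: "x \<in> L \<Longrightarrow> y \<in> L \<Longrightarrow> br x y \<in> L"
  using subalgebra unfolding subalgebra_def by auto

lemma neg_mem: "x \<in> L \<Longrightarrow> - x \<in> L"
  using scale_mem[of x "-1"] by simp

lemma diff_mem: "x \<in> L \<Longrightarrow> y \<in> L \<Longrightarrow> x - y \<in> L"
  using add_mem[OF _ neg_mem, of x y] by simp

lemma Lmult_in_multA0: "a \<in> L \<Longrightarrow> Lmult br a \<in> multA0 scale br L"
  using gen_L[of a UNIV] unfolding multA0_def multA_def
  by (auto simp: Lmult_def br_mem)

lemma Rmult_in_multA0: "a \<in> L \<Longrightarrow> Rmult br a \<in> multA0 scale br L"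
  using Rmult_in_multA[where p = a] unfolding multA0_def
  by (auto simp: Rmult_def br_mem)

text \<open>The Leibniz identities rewrite each bracket of x \<in> X with [w, a] or [a, w] as brackets of
  w with [x, a], [a, x] \<in> X plus brackets of elements of L.\<close>

lemma bracket_conductor_br_mem:
  assumes X: "\<And>a x. a \<in> L \<Longrightarrow> x \<in> X \<Longrightarrow> br a x \<in> X \<and> br x a \<in> X"
    and a: "a \<in> L" and w: "w \<in> bracket_conductor br L X"
  shows "br w a \<in> bracket_conductor br L X \<and> br a w \<in> bracket_conductor br L X"
proof -
  have "br x (br w a) \<in> L \<and> br (br w a) x \<in> L \<and> br x (br a w) \<in> L \<and> br (br a w) x \<in> L"
    if x: "x \<in> X" for x
  proof -
    have xw: "br x w \<in> L" "br w x \<in> L"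
      using w x unfolding bracket_conductor_def by auto
    have "br (br x a) w \<in> L" "br w (br x a) \<in> L" "br (br a x) w \<in> L" "br w (br a x) \<in> L"
      using w X[OF a x] unfolding bracket_conductor_def by auto
    moreover have "br x (br w a) = br (br x w) a - br (br x a) w"
      and "br (br w a) x = br w (br a x) + br (br w x) a"
      and "br x (br a w) = br (br x a) w + br a (br x w)"
      and "br (br a w) x = br a (br w x) + br (br a x) w"
      using leibniz_right[of x w a] leibniz_right[of w a x] leibniz_left[of x a w]
        leibniz_right[of a w x]
      by (simp_all add: algebra_simps)
    ultimately show ?thesis
      using xw a by (simp add: add_mem diff_mem br_mem)
  qed
  then show ?thesis unfolding bracket_conductor_def by blast
qed

lemma idealL_subset_bracket_conductor:
  assumes "\<And>a x. a \<in> L \<Longrightarrow> x \<in> X \<Longrightarrow> br a x \<in> X \<and> br x a \<in> X"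
    and "q \<in> bracket_conductor br L X"
  shows "idealL scale br L q \<subseteq> bracket_conductor br L X"
  using assms
  by (intro idealL_subset bracket_conductor_br_mem)
    (auto simp: bracket_conductor_def zero_mem add_mem scale_mem br_add_left br_add_right
      br_scale_left br_scale_right)

lemma ideal_image_subset_colon:
  assumes I: "two_sided_ideal scale (multA0 scale br L) I"
    and q: "\<forall>i\<in>I. Rmult br q \<circ> i \<in> multA0 scale br L"
  shows "(\<Union>k\<in>I. k ` L) \<subseteq> colon scale br L q"
proof -
  let ?X = "\<Union>k\<in>I. k ` L"
  have I_A0: "k \<in> multA0 scale br L" if "k \<in> I" for k
    using I that unfolding two_sided_ideal_def by blast
  have X_L: "?X \<subseteq> L"
    using I_A0 unfolding multA0_def by blast
  have X_stable: "br a x \<in> ?X \<and> br x a \<in> ?X" if "a \<in> L" "x \<in> ?X" for a x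
  proof -
    obtain k u where k: "k \<in> I" "u \<in> L" "x = k u" using \<open>x \<in> ?X\<close> by blast
    have "Lmult br a \<circ> k \<in> I" "Rmult br a \<circ> k \<in> I"
      using I k(1) Lmult_in_multA0[OF \<open>a \<in> L\<close>] Rmult_in_multA0[OF \<open>a \<in> L\<close>]
      unfolding two_sided_ideal_def by blast+
    moreover have "br a x = (Lmult br a \<circ> k) u" "br x a = (Rmult br a \<circ> k) u"
      by (simp_all add: Lmult_def Rmult_def k(3))
    ultimately show ?thesis
      using k(2) by blast
  qed
  have "q \<in> bracket_conductor br L ?X"
    unfolding bracket_conductor_def
  proof (intro CollectI ballI)
    fix x assume "x \<in> ?X"
    then obtain k u where k: "k \<in> I" "u \<in> L" "x = k u" by blast
    have "br x q \<in> L"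
      using q k unfolding multA0_def by (auto simp: Rmult_def)
    moreover have "br q x = - br x q"
      using gen_alg_anticomm I_A0[OF k(1)] k(3) unfolding multA0_def multA_def by blast
    ultimately show "br x q \<in> L \<and> br q x \<in> L" by (simp add: neg_mem)
  qed
  then have "idealL scale br L q \<subseteq> bracket_conductor br L ?X"
    using X_stable by (intro idealL_subset_bracket_conductor)
  then show ?thesis
    using X_L unfolding colon_def bracket_conductor_def by blast
qed

end

theorem proposition6p9:
  fixes scale :: "'f::field \<Rightarrow> 'q::ab_group_add \<Rightarrow> 'q"
    and br :: "'q \<Rightarrow> 'q \<Rightarrow> 'q"
    and L :: "'q set"
  assumes "symmetric_leibniz_algebra scale br"
    and "subalgebra scale br L"
    and "dense_in scale br L"
    and "ran_alg br = {0}" and "lan_alg br = {0}"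
    and "strong_right_ideally_absorbed scale (multA scale br) (multA0 scale br L)"
  shows "algebra_of_quotients scale br L"
  unfolding algebra_of_quotients_def
proof (intro allI impI)
  interpret leibniz_subalgebra scale br L
    using assms(1,2) by (intro leibniz_subalgebra.intro symmetric_leibniz.intro
      leibniz_subalgebra_axioms.intro)
  fix p q :: 'q
  assume "p \<noteq> 0"
  obtain I j where I: "two_sided_ideal scale (multA0 scale br L) I"
    "\<forall>i\<in>I. Rmult br q \<circ> i \<in> multA0 scale br L"
    and j: "j \<in> I" "Rmult br p \<circ> j \<noteq> (\<lambda>u. 0)"
    using strong_right_ideally_absorbed_nonzero_product[OF assms(6) Rmult_in_multA Rmult_in_multA
        Rmult_nonzero[OF assms(4) \<open>p \<noteq> 0\<close>]] .
  have "j \<in> multA scale br"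
    using I(1) j(1) unfolding two_sided_ideal_def multA0_def by blast
  then have "Rmult br p \<circ> j \<in> multM scale br"
    using Rmult_in_multA multA_subset_multM unfolding multA_def
    by (blast intro: gen_comp)
  then obtain y where "y \<in> L" "(Rmult br p \<circ> j) y \<noteq> 0"
    using dense_in_nonzero_at[OF assms(3) _ j(2)] by blast
  then have "br (j y) p \<noteq> 0"
    by (simp add: Rmult_def)
  moreover have "j y \<in> colon scale br L q"
    using ideal_image_subset_colon[OF I] j(1) \<open>y \<in> L\<close> by blast
  ultimately show "(\<exists>x\<in>colon scale br L q. br x p \<noteq> 0) \<or> (\<exists>y\<in>colon scale br L q. br p y \<noteq> 0)"
    by blast
qed

end
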